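(* Let $L\subseteq Q$ be an extension of Lie algebras with $L$ semiprime, and suppose $Q$ is an algebra of quotients of $L$. Then $A(Q)$ is a left quotient algebra of $A_0$.
   Context: Algebras are over a commutative unital ring $\Phi$. For a Lie algebra $Q$, $\mathrm{ad}_x(y)=[x,y]$ and $A(Q)$ is the associative subalgebra of $\mathrm{End}_\Phi(Q)$ generated by all $\mathrm{ad}_x$, $x\in Q$. For a Lie subalgebra $L\subseteq Q$, $A_0=\{\mu\in A(Q):\mu(L)\subseteq L\}$. $\mathrm{Ann}_L(X)=\{a\in L:[a,X]=0\}$. $L$ is semiprime if $[I,I]\ne0$ for every nonzero ideal $I$ of $L$. $Q$ is an algebra of quotients of $L$ if for every nonzero $q\in Q$ there is an ideal $I$ of $L$ with $\mathrm{Ann}_L(I)=0$ and $0\neq[I,q]\subseteq L$. An associative algebra $S$ is a left quotient algebra of a subalgebra $A$ if for all $p,q\in S$ with $p\ne0$ there exists $x\in A$ with $xp\neq0$ and $xq\in A$. *)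

theory Defs
  imports Main "HOL.Modules"
begin

text \<open>A Lie algebra over a commutative unital ring: the carrier is the whole type 'q,
  a module (via scalar action s) with a bilinear alternating bracket satisfying Jacobi.\<close>

definition lie_algebra ::
  "('r::comm_ring_1 \<Rightarrow> 'q::ab_group_add \<Rightarrow> 'q) \<Rightarrow> ('q \<Rightarrow> 'q \<Rightarrow> 'q) \<Rightarrow> bool" where
  "lie_algebra s br \<longleftrightarrow> module s
     \<and> (\<forall>x y z. br (x + y) z = br x z + br y z)
     \<and> (\<forall>x y z. br x (y + z) = br x y + br x z)
     \<and> (\<forall>r x y. br (s r x) y = s r (br x y))
     \<and> (\<forall>r x y. br x (s r y) = s r (br x y))
     \<and> (\<forall>x. br x x = 0)
     \<and> (\<forall>x y z. br x (br y z) + br y (br z x) + br z (br x y) = 0)"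

definition lie_subalgebra ::
  "('r::comm_ring_1 \<Rightarrow> 'q::ab_group_add \<Rightarrow> 'q) \<Rightarrow> ('q \<Rightarrow> 'q \<Rightarrow> 'q) \<Rightarrow> 'q set \<Rightarrow> bool" where
  "lie_subalgebra s br L \<longleftrightarrow> module.subspace s L \<and> (\<forall>x\<in>L. \<forall>y\<in>L. br x y \<in> L)"

definition lie_ideal ::
  "('r::comm_ring_1 \<Rightarrow> 'q::ab_group_add \<Rightarrow> 'q) \<Rightarrow> ('q \<Rightarrow> 'q \<Rightarrow> 'q) \<Rightarrow> 'q set \<Rightarrow> 'q set \<Rightarrow> bool" where
  "lie_ideal s br L I \<longleftrightarrow> module.subspace s I \<and> I \<subseteq> L \<and> (\<forall>x\<in>I. \<forall>y\<in>L. br x y \<in> I)"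

text \<open>[I,I] (the span of brackets) is nonzero iff some bracket of elements of I is nonzero.\<close>
definition semiprime ::
  "('r::comm_ring_1 \<Rightarrow> 'q::ab_group_add \<Rightarrow> 'q) \<Rightarrow> ('q \<Rightarrow> 'q \<Rightarrow> 'q) \<Rightarrow> 'q set \<Rightarrow> bool" where
  "semiprime s br L \<longleftrightarrow>
     (\<forall>I. lie_ideal s br L I \<and> I \<noteq> {0} \<longrightarrow> (\<exists>a\<in>I. \<exists>b\<in>I. br a b \<noteq> 0))"

definition Ann :: "('q \<Rightarrow> 'q \<Rightarrow> 'q::zero) \<Rightarrow> 'q set \<Rightarrow> 'q set \<Rightarrow> 'q set" where
  "Ann br L X = {a \<in> L. \<forall>x\<in>X. br a x = 0}"

definition algebra_of_quotients ::
  "('r::comm_ring_1 \<Rightarrow> 'q::ab_group_add \<Rightarrow> 'q) \<Rightarrow> ('q \<Rightarrow> 'q \<Rightarrow> 'q) \<Rightarrow> 'q set \<Rightarrow> bool" where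
  "algebra_of_quotients s br L \<longleftrightarrow>
     (\<forall>q. q \<noteq> 0 \<longrightarrow> (\<exists>I. lie_ideal s br L I \<and> Ann br L I = {0}
        \<and> (\<exists>x\<in>I. br x q \<noteq> 0) \<and> (\<forall>x\<in>I. br x q \<in> L)))"

definition ad :: "('q \<Rightarrow> 'q \<Rightarrow> 'q) \<Rightarrow> 'q \<Rightarrow> 'q \<Rightarrow> 'q" where
  "ad br x = (\<lambda>y. br x y)"

text \<open>A(Q): the associative Phi-subalgebra of End(Q) generated by all ad x.\<close>
inductive_set assocA ::
  "('r::comm_ring_1 \<Rightarrow> 'q::ab_group_add \<Rightarrow> 'q) \<Rightarrow> ('q \<Rightarrow> 'q \<Rightarrow> 'q) \<Rightarrow> ('q \<Rightarrow> 'q) set"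
  for s br where
  gen: "ad br x \<in> assocA s br"
| zero: "(\<lambda>_. 0) \<in> assocA s br"
| add: "f \<in> assocA s br \<Longrightarrow> g \<in> assocA s br \<Longrightarrow> (\<lambda>v. f v + g v) \<in> assocA s br"
| scal: "f \<in> assocA s br \<Longrightarrow> (\<lambda>v. s r (f v)) \<in> assocA s br"
| comp: "f \<in> assocA s br \<Longrightarrow> g \<in> assocA s br \<Longrightarrow> f \<circ> g \<in> assocA s br"

definition A0 ::
  "('r::comm_ring_1 \<Rightarrow> 'q::ab_group_add \<Rightarrow> 'q) \<Rightarrow> ('q \<Rightarrow> 'q \<Rightarrow> 'q) \<Rightarrow> 'q set \<Rightarrow> ('q \<Rightarrow> 'q) set" where
  "A0 s br L = {\<mu> \<in> assocA s br. \<mu> ` L \<subseteq> L}"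

text \<open>S is a left quotient algebra of its subalgebra A (multiplication = composition).\<close>
definition left_quotient_algebra :: "('q \<Rightarrow> 'q::zero) set \<Rightarrow> ('q \<Rightarrow> 'q) set \<Rightarrow> bool" where
  "left_quotient_algebra S A \<longleftrightarrow>
     (\<forall>p\<in>S. \<forall>q\<in>S. p \<noteq> (\<lambda>_. 0) \<longrightarrow> (\<exists>x\<in>A. x \<circ> p \<noteq> (\<lambda>_. 0) \<and> x \<circ> q \<in> A))"

end

theory Submission
  imports Defs
begin

text \<open>
  For an ideal \<open>J\<close> of \<open>L\<close>, the layers \<open>layer J n\<close> consist of the elements \<open>v\<close> of \<open>Q\<close> with
  \<open>[a\<^sub>1,[a\<^sub>2,\<dots>[a\<^sub>n,v]\<dots>]] \<in> L\<close> for all \<open>a\<^sub>i \<in> J\<close>. Every \<open>\<mu> \<in> A(Q)\<close> raises layers by a fixed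
  amount \<open>k\<close>, uniformly for all ideals \<open>J\<close> inside some essential ideal \<open>I\<close>: for \<open>ad x\<close> take
  \<open>k = 1\<close> and for \<open>I\<close> an ideal of denominators of \<open>x\<close>; sums and products are handled by
  intersecting ideals, and essential ideals of a semiprime \<open>L\<close> are closed under intersection.
  Given \<open>p \<noteq> 0\<close> and \<open>q\<close> in \<open>A(Q)\<close>, pick \<open>v\<close> with \<open>p v \<noteq> 0\<close> and such \<open>I, k\<close> for \<open>q\<close>. Since
  an essential ideal acts faithfully on \<open>Q\<close>, a product \<open>x\<close> of \<open>k + 1\<close> maps \<open>ad a\<close> with
  \<open>a \<in> I\<close> satisfies \<open>x (p v) \<noteq> 0\<close> and sends \<open>layer I (k + 1) \<supseteq> q L\<close> into \<open>L\<close>; so \<open>x\<close> and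
  \<open>x \<circ> q\<close> lie in \<open>A\<^sub>0\<close>.
\<close>

primrec layer :: "('q \<Rightarrow> 'q \<Rightarrow> 'q) \<Rightarrow> 'q set \<Rightarrow> 'q set \<Rightarrow> nat \<Rightarrow> 'q set" where
  "layer br L J 0 = L"
| "layer br L J (Suc n) = {v. \<forall>a\<in>J. br a v \<in> layer br L J n}"

locale lie =
  fixes s :: "'r::comm_ring_1 \<Rightarrow> 'q::ab_group_add \<Rightarrow> 'q"
    and br :: "'q \<Rightarrow> 'q \<Rightarrow> 'q"
  assumes lie_algebra: "lie_algebra s br"
begin

sublocale module s
  using lie_algebra unfolding lie_algebra_def by blast

lemma bracket_add_left: "br (x + y) z = br x z + br y z"
  and bracket_add_right: "br x (y + z) = br x y + br x z"
  and bracket_scale_left: "br (s r x) y = s r (br x y)"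
  and bracket_scale_right: "br x (s r y) = s r (br x y)"
  and bracket_self: "br x x = 0"
  and jacobi: "br x (br y z) + br y (br z x) + br z (br x y) = 0"
  using lie_algebra unfolding lie_algebra_def by blast+

lemma bracket_zero_left [simp]: "br 0 x = 0"
  using bracket_add_left[of 0 0 x] by simp

lemma bracket_zero_right [simp]: "br x 0 = 0"
  using bracket_add_right[of x 0 0] by simp

lemma bracket_antisym: "br x y = - br y x"
proof -
  have "br x x + br y x + (br x y + br y y) = 0"
    using bracket_self[of "x + y"] by (simp add: bracket_add_left bracket_add_right)
  then show ?thesis
    by (simp add: bracket_self eq_neg_iff_add_eq_0 add.commute)
qed

lemma bracket_neg_right: "br x (- y) = - br x y"
  using bracket_add_right[of x y "- y"] by (simp add: eq_neg_iff_add_eq_0 add.commute)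

lemma bracket_Leibniz: "br a (br b v) = br (br a b) v + br b (br a v)"
  using jacobi[of a b v] bracket_antisym[of v a] bracket_antisym[of v "br a b"]
  by (simp add: bracket_neg_right algebra_simps)

end

locale lie_extension = lie +
  fixes L
  assumes lie_subalgebra: "lie_subalgebra s br L"
begin

lemma subspace_L: "subspace L"
  and bracket_closed: "x \<in> L \<Longrightarrow> y \<in> L \<Longrightarrow> br x y \<in> L"
  using lie_subalgebra unfolding lie_subalgebra_def by blast+

lemma zero_in_L: "0 \<in> L"
  and add_in_L: "x \<in> L \<Longrightarrow> y \<in> L \<Longrightarrow> x + y \<in> L"
  and scale_in_L: "x \<in> L \<Longrightarrow> s r x \<in> L"
  and neg_in_L: "x \<in> L \<Longrightarrow> - x \<in> L"
  using subspace_0 subspace_add subspace_scale subspace_neg subspace_L by blast+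

subsection \<open>Ideals and annihilators\<close>

lemma lie_idealD:
  assumes "lie_ideal s br L I"
  shows "subspace I" "I \<subseteq> L"
    and lie_ideal_bracket_left: "x \<in> I \<Longrightarrow> y \<in> L \<Longrightarrow> br x y \<in> I"
    and lie_ideal_bracket_right: "x \<in> I \<Longrightarrow> y \<in> L \<Longrightarrow> br y x \<in> I"
  using assms subspace_neg[of I "br x y"] bracket_antisym[of y x]
  unfolding lie_ideal_def by auto

lemma lie_ideal_L: "lie_ideal s br L L"
  unfolding lie_ideal_def using subspace_L bracket_closed by blast

lemma lie_ideal_Int:
  assumes "lie_ideal s br L I" "lie_ideal s br L J"
  shows "lie_ideal s br L (I \<inter> J)"
  using assms lie_idealD[OF assms(1)] lie_idealD[OF assms(2)] subspace_inter
  unfolding lie_ideal_def by auto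

lemma Ann_bracket_closed:
  assumes I: "lie_ideal s br L I" and x: "x \<in> Ann br L I" and y: "y \<in> L"
  shows "br x y \<in> Ann br L I"
proof -
  have "br (br x y) z = 0" if z: "z \<in> I" for z
  proof -
    have "br y z \<in> I" using lie_ideal_bracket_right[OF I z y] .
    then show ?thesis
      using x z bracket_Leibniz[of x y z] unfolding Ann_def by simp
  qed
  with x y show ?thesis unfolding Ann_def by (auto intro: bracket_closed)
qed

lemma lie_ideal_Ann:
  assumes I: "lie_ideal s br L I"
  shows "lie_ideal s br L (Ann br L I)"
proof -
  have "subspace (Ann br L I)"
    by (rule subspaceI)
      (auto simp: Ann_def zero_in_L add_in_L scale_in_L bracket_add_left bracket_scale_left)
  then show ?thesis
    using Ann_bracket_closed[OF I] unfolding lie_ideal_def Ann_def by auto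
qed

text \<open>Semiprimeness applies since \<open>Ann I \<inter> I\<close> is an ideal on which the bracket vanishes.\<close>

lemma Ann_Int_eq_zero:
  assumes "semiprime s br L" and I: "lie_ideal s br L I"
  shows "Ann br L I \<inter> I = {0}"
proof -
  have "lie_ideal s br L (Ann br L I \<inter> I)"
    using lie_ideal_Int[OF lie_ideal_Ann[OF I] I] .
  moreover have "\<forall>a\<in>Ann br L I \<inter> I. \<forall>b\<in>Ann br L I \<inter> I. br a b = 0"
    unfolding Ann_def by blast
  ultimately show ?thesis
    using assms(1) unfolding semiprime_def by blast
qed

definition essential_ideal where
  "essential_ideal I \<longleftrightarrow> lie_ideal s br L I \<and> Ann br L I = {0}"

lemma essential_ideal_subset_L: "essential_ideal I \<Longrightarrow> I \<subseteq> L"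
  unfolding essential_ideal_def lie_ideal_def by blast

lemma essential_ideal_L:
  assumes "semiprime s br L"
  shows "essential_ideal L"
  using Ann_Int_eq_zero[OF assms lie_ideal_L] lie_ideal_L
  unfolding essential_ideal_def Ann_def by blast

lemma essential_ideal_Int:
  assumes sp: "semiprime s br L" and "essential_ideal I" "essential_ideal J"
  shows "essential_ideal (I \<inter> J)"
proof -
  have I: "lie_ideal s br L I" "Ann br L I = {0}"
    and J: "lie_ideal s br L J" "Ann br L J = {0}"
    using assms(2,3) unfolding essential_ideal_def by blast+
  have K: "lie_ideal s br L (I \<inter> J)" using lie_ideal_Int[OF I(1) J(1)] .
  have "x = 0" if x: "x \<in> Ann br L (I \<inter> J)" for x
  proof -
    have xL: "x \<in> L" using x unfolding Ann_def by blast
    have "br x a = 0" if a: "a \<in> I" for a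
    proof -
      have xaI: "br x a \<in> I" using lie_ideal_bracket_right[OF I(1) a xL] .
      have xaL: "br x a \<in> L" using xaI lie_idealD(2)[OF I(1)] by blast
      have "br (br x a) b = 0" if b: "b \<in> J" for b
      proof -
        have bL: "b \<in> L" using b lie_idealD(2)[OF J(1)] by blast
        have "br (br x a) b \<in> I \<inter> J"
          using lie_ideal_bracket_left[OF I(1) xaI bL] lie_ideal_bracket_right[OF J(1) b xaL] by blast
        moreover have "br (br x a) b \<in> Ann br L (I \<inter> J)"
          using Ann_bracket_closed[OF K Ann_bracket_closed[OF K x] bL] lie_idealD(2)[OF I(1)] a by blast
        ultimately show ?thesis using Ann_Int_eq_zero[OF sp K] by blast
      qed
      then have "br x a \<in> Ann br L J" unfolding Ann_def using xaL by blast
      then show ?thesis using J(2) by blast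
    qed
    then have "x \<in> Ann br L I" unfolding Ann_def using xL by blast
    then show ?thesis using I(2) by blast
  qed
  then show ?thesis
    using K lie_idealD(1)[OF lie_ideal_Ann[OF K]] subspace_0
    unfolding essential_ideal_def by blast
qed

text \<open>If \<open>[J, u] = 0\<close>, then a nonzero \<open>[b, u] \<in> L\<close> supplied by the quotient property
  annihilates \<open>J\<close>, by the Leibniz rule.\<close>

lemma essential_ideal_acts_faithfully:
  assumes "algebra_of_quotients s br L" and J: "essential_ideal J" and "u \<noteq> 0"
  shows "\<exists>a\<in>J. br a u \<noteq> 0"
proof (rule ccontr)
  assume J_kills_u: "\<not> (\<exists>a\<in>J. br a u \<noteq> 0)"
  obtain I b where I: "lie_ideal s br L I" "\<forall>x\<in>I. br x u \<in> L"
    and b: "b \<in> I" "br b u \<noteq> 0"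
    using assms(1,3) unfolding algebra_of_quotients_def by blast
  have bL: "b \<in> L" using b(1) lie_idealD(2)[OF I(1)] by blast
  have "br (br b u) a = 0" if a: "a \<in> J" for a
  proof -
    have "br a b \<in> J"
      using lie_ideal_bracket_left[OF _ a bL] J unfolding essential_ideal_def by blast
    then have "br a (br b u) = 0"
      using bracket_Leibniz[of a b u] J_kills_u a by simp
    then show ?thesis by (metis bracket_antisym neg_equal_0_iff_equal)
  qed
  then have "br b u \<in> Ann br L J" unfolding Ann_def using I(2) b(1) by blast
  then show False using J b(2) unfolding essential_ideal_def by blast
qed

subsection \<open>Layers\<close>

lemma zero_in_layer: "0 \<in> layer br L J n"
  by (induction n) (auto simp: zero_in_L)

lemma add_in_layer: "x \<in> layer br L J n \<Longrightarrow> y \<in> layer br L J n \<Longrightarrow> x + y \<in> layer br L J n"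
  by (induction n arbitrary: x y) (auto simp: add_in_L bracket_add_right)

lemma scale_in_layer: "x \<in> layer br L J n \<Longrightarrow> s r x \<in> layer br L J n"
  by (induction n arbitrary: x) (auto simp: scale_in_L bracket_scale_right)

lemma layer_subset_Suc:
  assumes "J \<subseteq> L"
  shows "layer br L J n \<subseteq> layer br L J (Suc n)"
  using assms by (induction n) (auto intro: bracket_closed)

lemma layer_mono:
  assumes "J \<subseteq> L" "m \<le> n"
  shows "layer br L J m \<subseteq> layer br L J n"
  using assms(2) layer_subset_Suc[OF assms(1)] by (induction n) (auto simp: le_Suc_eq)

lemma L_subset_layer: "J \<subseteq> L \<Longrightarrow> L \<subseteq> layer br L J n"
  using layer_mono[of J 0 n] by simp

lemma bracket_L_in_layer:
  assumes J: "lie_ideal s br L J"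
  shows "b \<in> L \<Longrightarrow> v \<in> layer br L J n \<Longrightarrow> br b v \<in> layer br L J n"
proof (induction n arbitrary: b v)
  case 0
  then show ?case by (auto intro: bracket_closed)
next
  case (Suc n)
  have "br a (br b v) \<in> layer br L J n" if a: "a \<in> J" for a
    using bracket_Leibniz[of a b v] lie_ideal_bracket_left[OF J a Suc.prems(1)] Suc a
    by (auto intro: add_in_layer)
  then show ?case by simp
qed

lemma bracket_in_layer_Suc:
  assumes J: "lie_ideal s br L J" and c: "\<forall>a\<in>J. br a c \<in> L"
  shows "v \<in> layer br L J n \<Longrightarrow> br c v \<in> layer br L J (Suc n)"
proof (induction n arbitrary: v)
  case 0
  have "br a (br c v) \<in> L" if a: "a \<in> J" for a
  proof -
    have "br (br a v) c \<in> L"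
      using c lie_ideal_bracket_left[OF J a] 0 by simp
    then have "br c (br a v) \<in> L" by (metis bracket_antisym neg_in_L)
    moreover have "br (br a c) v \<in> L" using c a 0 by (auto intro: bracket_closed)
    ultimately show ?thesis by (subst bracket_Leibniz) (rule add_in_L)
  qed
  then show ?case by simp
next
  case (Suc n)
  have "br a (br c v) \<in> layer br L J (Suc n)" if a: "a \<in> J" for a
  proof -
    have "br (br a c) v \<in> layer br L J (Suc n)"
      using bracket_L_in_layer[OF J] c a Suc.prems by blast
    moreover have "br c (br a v) \<in> layer br L J (Suc n)"
      using Suc a by simp
    ultimately show ?thesis by (subst bracket_Leibniz) (rule add_in_layer)
  qed
  then show ?case by (simp del: layer.simps(1))
qed

subsection \<open>Elements of \<open>A(Q)\<close> raise layers\<close>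

definition raises_layers where
  "raises_layers I \<mu> k \<longleftrightarrow> (\<forall>J n v. lie_ideal s br L J \<longrightarrow> J \<subseteq> I \<longrightarrow>
     v \<in> layer br L J n \<longrightarrow> \<mu> v \<in> layer br L J (n + k))"

lemma raises_layers_image_L:
  "raises_layers I \<mu> k \<Longrightarrow> lie_ideal s br L I \<Longrightarrow> \<mu> ` L \<subseteq> layer br L I k"
  unfolding raises_layers_def using layer.simps(1)[of br L I] by fastforce

lemma raises_layers_antimono: "raises_layers I \<mu> k \<Longrightarrow> I' \<subseteq> I \<Longrightarrow> raises_layers I' \<mu> k"
  unfolding raises_layers_def by blast

lemma raises_layers_zero: "raises_layers I (\<lambda>_. 0) 0"
  unfolding raises_layers_def by (simp add: zero_in_layer)

lemma raises_layers_ad: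
  assumes "\<forall>a\<in>I. br a x \<in> L"
  shows "raises_layers I (ad br x) 1"
  unfolding raises_layers_def ad_def
proof (intro allI impI)
  fix J n v assume "lie_ideal s br L J" "J \<subseteq> I" "v \<in> layer br L J n"
  then show "br x v \<in> layer br L J (n + 1)"
    using bracket_in_layer_Suc[of J x v n] assms by auto
qed

lemma raises_layers_add:
  assumes "raises_layers I f k" "raises_layers I g l"
  shows "raises_layers I (\<lambda>v. f v + g v) (max k l)"
  unfolding raises_layers_def
proof (intro allI impI)
  fix J n v assume J: "lie_ideal s br L J" "J \<subseteq> I" "v \<in> layer br L J n"
  have "f v \<in> layer br L J (n + k)" "g v \<in> layer br L J (n + l)"
    using assms J unfolding raises_layers_def by blast+
  moreover have "layer br L J (n + k) \<subseteq> layer br L J (n + max k l)"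
    and "layer br L J (n + l) \<subseteq> layer br L J (n + max k l)"
    using layer_mono[OF lie_idealD(2)[OF J(1)]] by simp_all
  ultimately have "f v \<in> layer br L J (n + max k l)" "g v \<in> layer br L J (n + max k l)"
    by blast+
  then show "f v + g v \<in> layer br L J (n + max k l)" by (rule add_in_layer)
qed

lemma raises_layers_scale: "raises_layers I f k \<Longrightarrow> raises_layers I (\<lambda>v. s r (f v)) k"
  unfolding raises_layers_def using scale_in_layer by blast

lemma raises_layers_comp:
  assumes f: "raises_layers I f k" and g: "raises_layers I g l"
  shows "raises_layers I (f \<circ> g) (l + k)"
  unfolding raises_layers_def
proof (intro allI impI)
  fix J n v assume J: "lie_ideal s br L J" "J \<subseteq> I" and "v \<in> layer br L J n"
  then have "g v \<in> layer br L J (n + l)" using g unfolding raises_layers_def by blast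
  then have "f (g v) \<in> layer br L J (n + l + k)" using f J unfolding raises_layers_def by blast
  then show "(f \<circ> g) v \<in> layer br L J (n + (l + k))" by (simp add: add.assoc)
qed

lemma assocA_raises_layers:
  assumes sp: "semiprime s br L" and aoq: "algebra_of_quotients s br L"
    and "\<mu> \<in> assocA s br"
  shows "\<exists>I k. essential_ideal I \<and> raises_layers I \<mu> k"
  using assms(3)
proof (induction rule: assocA.induct)
  case (gen x)
  show ?case
  proof (cases "x = 0")
    case True
    then have "ad br x = (\<lambda>_. 0)" by (simp add: ad_def fun_eq_iff)
    then show ?thesis using essential_ideal_L[OF sp] raises_layers_zero by auto
  next
    case False
    then obtain I where "lie_ideal s br L I" "Ann br L I = {0}" "\<forall>a\<in>I. br a x \<in> L"
      using aoq unfolding algebra_of_quotients_def by blast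
    then show ?thesis using raises_layers_ad unfolding essential_ideal_def by blast
  qed
next
  case zero
  show ?case using essential_ideal_L[OF sp] raises_layers_zero by blast
next
  case (add f g)
  then obtain I k J l where I: "essential_ideal I" "raises_layers I f k"
    and J: "essential_ideal J" "raises_layers J g l" by blast
  have "raises_layers (I \<inter> J) (\<lambda>v. f v + g v) (max k l)"
    by (rule raises_layers_add[OF raises_layers_antimono[OF I(2) inf_le1]
          raises_layers_antimono[OF J(2) inf_le2]])
  then show ?case using essential_ideal_Int[OF sp I(1) J(1)] by blast
next
  case (scal f r)
  then obtain I k where "essential_ideal I" "raises_layers I f k" by blast
  then show ?case using raises_layers_scale[of I f k r] by blast
next
  case (comp f g)
  then obtain I k J l where I: "essential_ideal I" "raises_layers I f k"
    and J: "essential_ideal J" "raises_layers J g l" by blast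
  have "raises_layers (I \<inter> J) (f \<circ> g) (l + k)"
    by (rule raises_layers_comp[OF raises_layers_antimono[OF I(2) inf_le1]
          raises_layers_antimono[OF J(2) inf_le2]])
  then show ?case using essential_ideal_Int[OF sp I(1) J(1)] by blast
qed

subsection \<open>Bringing a layer back into \<open>L\<close>\<close>

lemma assocA_maps_layer_into_L:
  assumes aoq: "algebra_of_quotients s br L" and I: "essential_ideal I" and "u \<noteq> 0"
  shows "\<exists>x\<in>assocA s br. x u \<noteq> 0 \<and> x ` layer br L I (Suc n) \<subseteq> L"
  using assms(3)
proof (induction n arbitrary: u)
  case 0
  obtain a where "a \<in> I" "br a u \<noteq> 0"
    using essential_ideal_acts_faithfully[OF aoq I 0] by blast
  then show ?case
    using assocA.gen[of br a s] unfolding ad_def by fastforce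
next
  case (Suc n)
  obtain a where a: "a \<in> I" "br a u \<noteq> 0"
    using essential_ideal_acts_faithfully[OF aoq I Suc.prems] by blast
  then obtain x where x: "x \<in> assocA s br" "x (br a u) \<noteq> 0"
    "x ` layer br L I (Suc n) \<subseteq> L"
    using Suc.IH by blast
  have "br a w \<in> layer br L I (Suc n)" if "w \<in> layer br L I (Suc (Suc n))" for w
    using that a(1) unfolding layer.simps(2)[of br L I "Suc n"] by blast
  then have "(x \<circ> ad br a) ` layer br L I (Suc (Suc n)) \<subseteq> L"
    using x(3) unfolding ad_def by auto
  moreover have "x \<circ> ad br a \<in> assocA s br" using assocA.comp[OF x(1) assocA.gen] .
  moreover have "(x \<circ> ad br a) u \<noteq> 0" using x(2) by (simp add: ad_def)
  ultimately show ?case by blast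
qed

end

theorem mainTheorem2:
  fixes s :: "'r::comm_ring_1 \<Rightarrow> 'q::ab_group_add \<Rightarrow> 'q"
    and br :: "'q \<Rightarrow> 'q \<Rightarrow> 'q"
    and L :: "'q set"
  assumes "lie_algebra s br"
    and "lie_subalgebra s br L"
    and "semiprime s br L"
    and "algebra_of_quotients s br L"
  shows "left_quotient_algebra (assocA s br) (A0 s br L)"
  unfolding left_quotient_algebra_def
proof (intro ballI impI)
  interpret lie_extension s br L
    using assms(1,2) by (intro lie_extension.intro lie.intro lie_extension_axioms.intro)
  fix p q assume "p \<in> assocA s br" and q: "q \<in> assocA s br" and "p \<noteq> (\<lambda>_. 0)"
  then obtain v where v: "p v \<noteq> 0" by blast
  obtain I k where I: "essential_ideal I" and q_raises: "raises_layers I q k"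
    using assocA_raises_layers[OF assms(3,4) q] by blast
  obtain x where x: "x \<in> assocA s br" "x (p v) \<noteq> 0" "x ` layer br L I (Suc k) \<subseteq> L"
    using assocA_maps_layer_into_L[OF assms(4) I v] by blast
  have IL: "I \<subseteq> L" using essential_ideal_subset_L[OF I] .
  have "q ` L \<subseteq> layer br L I (Suc k)"
    using raises_layers_image_L[OF q_raises] I layer_subset_Suc[OF IL, of k]
    unfolding essential_ideal_def by blast
  then have "(x \<circ> q) ` L \<subseteq> L" using x(3) by (auto simp del: layer.simps)
  then have "x \<circ> q \<in> A0 s br L"
    using x(1) q unfolding A0_def by (blast intro: assocA.comp)
  moreover have "x \<in> A0 s br L" using x L_subset_layer[OF IL] unfolding A0_def by blast
  moreover have "x \<circ> p \<noteq> (\<lambda>_. 0)" using x(2) by (metis comp_apply)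
  ultimately show "\<exists>x\<in>A0 s br L. x \<circ> p \<noteq> (\<lambda>_. 0) \<and> x \<circ> q \<in> A0 s br L" by blast
qed

end
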